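(* The sets $NN(32)$ and $NN(34)$ are nonempty. That is, for $n=32$ and for $n=34$ there exist $\{\pm1\}$-sequences $A=a_1,\dots,a_{n+1}$, $B=b_1,\dots,b_{n+1}$, $C=c_1,\dots,c_n$, $D=d_1,\dots,d_n$ such that $N_A(i)+N_B(i)+N_C(i)+N_D(i)=0$ for all integers $i\neq 0$ (equivalently $N(A)+N(B)+N(C)+N(D)=2(2n+1)$), and $b_i=(-1)^{i-1}a_i$ for $1\le i\le n$.
   Context: For a finite sequence $A=a_1,\dots,a_m$ of integers, set $a_k=0$ for $k<1$ and $k>m$, and define its nonperiodic autocorrelation function $N_A(i)=\sum_{j\in\mathbb{Z}} a_j a_{i+j}$ for $i\in\mathbb{Z}$, and its norm $N(A)=\sum_{i\in\mathbb{Z}} N_A(i)x^i\in\mathbb{Z}[x,x^{-1}]$. Base sequences $BS(m,n)$ are quadruples $(A;B;C;D)$ of $\{\pm1\}$-sequences, $A,B$ of length $m$ and $C,D$ of length $n$, with $N(A)+N(B)+N(C)+N(D)=2(m+n)$. The set $NN(n)$ of near-normal sequences consists of those $(A;B;C;D)\in BS(n+1,n)$ with $b_i=(-1)^{i-1}a_i$ for $1\le i\le n$. *)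

theory Defs
  imports Main
begin

definition seq_at :: "int list \<Rightarrow> int \<Rightarrow> int" where
  "seq_at xs k = (if 1 \<le> k \<and> k \<le> int (length xs) then xs ! nat (k - 1) else 0)"

text \<open>Nonperiodic autocorrelation N_A(i) = sum over j in Z of a_j a_{i+j};
  only j in 1..m can contribute, so the sum is taken over that finite range.\<close>
definition autocorr :: "int list \<Rightarrow> int \<Rightarrow> int" where
  "autocorr xs i = (\<Sum>j\<in>{1..int (length xs)}. seq_at xs j * seq_at xs (i + j))"

definition pm1_seq :: "int list \<Rightarrow> bool" where
  "pm1_seq xs \<longleftrightarrow> (\<forall>x\<in>set xs. x = 1 \<or> x = -1)"

text \<open>Base sequences BS(m,n): N(A)+N(B)+N(C)+N(D) = 2(m+n) in Z[x,x^-1],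
  i.e. coefficientwise.\<close>
definition BS :: "nat \<Rightarrow> nat \<Rightarrow> (int list \<times> int list \<times> int list \<times> int list) set" where
  "BS m n = {(A, B, C, D).
     pm1_seq A \<and> pm1_seq B \<and> pm1_seq C \<and> pm1_seq D \<and>
     length A = m \<and> length B = m \<and> length C = n \<and> length D = n \<and>
     (\<forall>i::int. autocorr A i + autocorr B i + autocorr C i + autocorr D i =
                (if i = 0 then 2 * (int m + int n) else 0))}"

definition NN :: "nat \<Rightarrow> (int list \<times> int list \<times> int list \<times> int list) set" where
  "NN n = {(A, B, C, D). (A, B, C, D) \<in> BS (n + 1) n \<and>
     (\<forall>i::int. 1 \<le> i \<and> i \<le> int n \<longrightarrow> seq_at B i = (-1) ^ nat (i - 1) * seq_at A i)}"

end

(* Both sets are witnessed by explicit quadruples. Autocorrelations vanish at lags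
   beyond the sequence lengths, so the defining identities reduce to finitely many
   lags and are verified by evaluation. *)
theory Submission
  imports Defs
begin

lemma autocorr_eq_0_if_length_le: "int (length xs) \<le> \<bar>i\<bar> \<Longrightarrow> autocorr xs i = 0"
  unfolding autocorr_def by (auto simp: seq_at_def intro!: sum.neutral)

lemma autocorr_conv_sum_list:
  "autocorr xs i = sum_list (map (\<lambda>j. seq_at xs j * seq_at xs (i + j)) [1..int (length xs)])"
  unfolding autocorr_def by (simp add: sum_set_upto_conv_sum_list_int[symmetric])

lemma NN_memberI:
  assumes lengths: "length A = n + 1" "length B = n + 1" "length C = n" "length D = n"
    and pm1: "pm1_seq A" "pm1_seq B" "pm1_seq C" "pm1_seq D"
    and autocorr_sum: "\<forall>i\<in>set [-int n..int n].
      autocorr A i + autocorr B i + autocorr C i + autocorr D i =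
        (if i = 0 then 2 * (int (n + 1) + int n) else 0)"
    and alternating: "\<forall>i\<in>set [1..int n]. seq_at B i = (-1) ^ nat (i - 1) * seq_at A i"
  shows "(A, B, C, D) \<in> NN n"
proof -
  have "autocorr A i + autocorr B i + autocorr C i + autocorr D i =
      (if i = 0 then 2 * (int (n + 1) + int n) else 0)" for i
  proof (cases "\<bar>i\<bar> \<le> int n")
    case True
    then have "i \<in> set [-int n..int n]" by auto
    then show ?thesis using autocorr_sum by blast
  next
    case False
    then have "autocorr X i = 0" if "X \<in> {A, B, C, D}" for X
      using that lengths by (auto intro!: autocorr_eq_0_if_length_le)
    with False show ?thesis by auto
  qed
  moreover have "seq_at B i = (-1) ^ nat (i - 1) * seq_at A i" if "1 \<le> i" "i \<le> int n" for i
    using that alternating by auto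
  ultimately show ?thesis
    unfolding NN_def BS_def using lengths pm1 by auto
qed

lemma NN_32_nonempty: "NN 32 \<noteq> {}"
proof -
  let ?A = "[1, 1, -1, -1, -1, -1, -1, 1, 1, -1, 1, -1, 1, -1, 1, 1, 1,
             -1, -1, -1, 1, -1, 1, -1, -1, 1, 1, -1, -1, 1, -1, 1, 1] :: int list"
  let ?B = "[1, -1, -1, 1, -1, 1, -1, -1, 1, 1, 1, 1, 1, 1, 1, -1, 1,
             1, -1, 1, 1, 1, 1, 1, -1, -1, 1, 1, -1, -1, -1, -1, -1] :: int list"
  let ?C = "[1, -1, 1, -1, -1, 1, -1, 1, 1, 1, 1, -1, -1, 1, -1, -1,
             -1, 1, 1, -1, -1, 1, 1, 1, -1, 1, -1, 1, 1, 1, -1, -1] :: int list"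
  let ?D = "[1, -1, -1, 1, 1, -1, 1, -1, -1, -1, -1, -1, 1, -1, -1, 1,
             1, 1, -1, 1, -1, -1, -1, -1, 1, -1, 1, -1, -1, -1, -1, -1] :: int list"
  have "(?A, ?B, ?C, ?D) \<in> NN 32"
    by (rule NN_memberI; (unfold autocorr_conv_sum_list seq_at_def pm1_seq_def)?; code_simp)
  then show ?thesis by blast
qed

lemma NN_34_nonempty: "NN 34 \<noteq> {}"
proof -
  let ?A = "[-1, -1, 1, -1, 1, -1, 1, -1, 1, 1, 1, 1, -1, -1, 1, 1, -1, 1,
             -1, 1, 1, -1, -1, -1, -1, -1, -1, 1, -1, 1, 1, -1, -1, 1, 1] :: int list"
  let ?B = "[-1, 1, 1, 1, 1, 1, 1, 1, 1, -1, 1, -1, -1, 1, 1, -1, -1, -1,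
             -1, -1, 1, 1, -1, 1, -1, 1, -1, -1, -1, -1, 1, 1, -1, -1, -1] :: int list"
  let ?C = "[1, -1, -1, -1, -1, -1, 1, -1, 1, 1, -1, -1, 1, -1, 1, -1, -1,
             -1, -1, 1, 1, 1, 1, -1, -1, -1, 1, -1, -1, 1, 1, -1, -1, 1] :: int list"
  let ?D = "[1, 1, 1, 1, -1, 1, 1, 1, -1, 1, -1, 1, 1, -1, 1, -1, 1,
             1, -1, 1, 1, 1, -1, -1, -1, 1, -1, -1, 1, 1, -1, 1, 1, 1] :: int list"
  have "(?A, ?B, ?C, ?D) \<in> NN 34"
    by (rule NN_memberI; (unfold autocorr_conv_sum_list seq_at_def pm1_seq_def)?; code_simp)
  then show ?thesis by blast
qed

theorem proposition1:
  shows "NN 32 \<noteq> {} \<and> NN 34 \<noteq> {}"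
  using NN_32_nonempty NN_34_nonempty by blast

end
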